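(* Let $n\geq 1$ and $s\geq 1$ be integers. Let $G$ be a connected graph on $n+s$ vertices and let $S\subseteq V(G)$ with $|S|=s$. Suppose that every non-terminal level with respect to $S$ contains at least $2$ vertices, and that the second level, if it is non-terminal, contains at least $3$ vertices. Then \[ \sigma(S)\leq \begin{cases} \frac{1}{4}(n^2+8), & \text{if } 2\mid n,\\[2pt] \frac{1}{4}(n^2+7), & \text{if } 2\nmid n. \end{cases} \]
   Context: For a connected graph $G$ and $\emptyset\neq S\subseteq V(G)$, $d_G(S,u)=\min\{d_G(u,v): v\in S\}$, and the status of $S$ is $\sigma(S)=\sigma_G(S)=\sum_{u\in V(G)} d_G(S,u)$. For $i\geq 1$, the $i$-th level with respect to $S$ is the set of vertices $u$ with $d_G(S,u)=i$. The terminal level is the nonempty level with the largest index $i$; the non-terminal levels are all levels $1,\dots,r$ preceding the terminal level $r+1$ (all of which are nonempty by connectivity). *)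

theory Defs
  imports Complex_Main
begin

definition simple_graph :: "'a set \<Rightarrow> ('a \<Rightarrow> 'a \<Rightarrow> bool) \<Rightarrow> bool" where
  "simple_graph V E \<longleftrightarrow> finite V \<and> (\<forall>x y. E x y \<longrightarrow> x \<in> V \<and> y \<in> V)
     \<and> (\<forall>x y. E x y \<longrightarrow> E y x) \<and> (\<forall>x. \<not> E x x)"

definition walk :: "('a \<Rightarrow> 'a \<Rightarrow> bool) \<Rightarrow> 'a list \<Rightarrow> 'a \<Rightarrow> 'a \<Rightarrow> bool" where
  "walk E xs u v \<longleftrightarrow> xs \<noteq> [] \<and> hd xs = u \<and> last xs = v
     \<and> (\<forall>i. Suc i < length xs \<longrightarrow> E (xs ! i) (xs ! Suc i))"

definition connected_graph :: "'a set \<Rightarrow> ('a \<Rightarrow> 'a \<Rightarrow> bool) \<Rightarrow> bool" where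
  "connected_graph V E \<longleftrightarrow> V \<noteq> {} \<and> (\<forall>u\<in>V. \<forall>v\<in>V. \<exists>xs. walk E xs u v)"

definition gdist :: "('a \<Rightarrow> 'a \<Rightarrow> bool) \<Rightarrow> 'a \<Rightarrow> 'a \<Rightarrow> nat" where
  "gdist E u v = (LEAST k. \<exists>xs. walk E xs u v \<and> length xs = Suc k)"

definition setdist :: "('a \<Rightarrow> 'a \<Rightarrow> bool) \<Rightarrow> 'a set \<Rightarrow> 'a \<Rightarrow> nat" where
  "setdist E S u = Min (gdist E u ` S)"

definition status :: "'a set \<Rightarrow> ('a \<Rightarrow> 'a \<Rightarrow> bool) \<Rightarrow> 'a set \<Rightarrow> nat" where
  "status V E S = (\<Sum>u\<in>V. setdist E S u)"

definition level :: "'a set \<Rightarrow> ('a \<Rightarrow> 'a \<Rightarrow> bool) \<Rightarrow> 'a set \<Rightarrow> nat \<Rightarrow> 'a set" where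
  "level V E S i = {u\<in>V. setdist E S u = i}"

definition terminal_index :: "'a set \<Rightarrow> ('a \<Rightarrow> 'a \<Rightarrow> bool) \<Rightarrow> 'a set \<Rightarrow> nat" where
  "terminal_index V E S = Max (setdist E S ` V)"

end

theory Submission
  imports Defs
begin

text \<open>Sum the distances to S level by level and compare with the complementary sum
  \<open>D = \<Sum>\<^sub>u (t - d(S,u))\<close>, where t is the index of the terminal level: the status plus D equals
  \<open>t (n + s)\<close>, while the lower bounds on the sizes of the non-terminal levels give
  \<open>D \<ge> t s + t\<^sup>2 - 2\<close>. Hence \<open>\<sigma>(S) \<le> t n - t\<^sup>2 + 2\<close>, and
  \<open>4 (t n - t\<^sup>2 + 2) = n\<^sup>2 + 8 - (n - 2t)\<^sup>2\<close>, where the square is at least 1 when n is odd.\<close>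

lemma gdist_self: "gdist E u u = 0"
proof -
  have "walk E [u] u u" by (simp add: walk_def)
  then show ?thesis unfolding gdist_def by (intro Least_eq_0) auto
qed

lemma setdist_eq_0:
  assumes "finite S" and "u \<in> S"
  shows "setdist E S u = 0"
  using assms Min_le[of "gdist E u ` S" 0] gdist_self[of E u]
  by (force simp: setdist_def)

lemma setdist_le_terminal_index:
  assumes "finite V" and "u \<in> V"
  shows "setdist E S u \<le> terminal_index V E S"
  using assms by (simp add: terminal_index_def)

lemma sum_comp_eq_sum_card_fibres:
  fixes f :: "'a \<Rightarrow> nat" and h :: "nat \<Rightarrow> nat"
  assumes "finite V" and "\<And>u. u \<in> V \<Longrightarrow> f u \<le> t"
  shows "(\<Sum>u\<in>V. h (f u)) = (\<Sum>i\<le>t. h i * card {u\<in>V. f u = i})"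
proof -
  have "(\<Sum>i\<le>t. h i * card {u\<in>V. f u = i}) = (\<Sum>i\<le>t. \<Sum>u\<in>{u\<in>V. f u = i}. h (f u))"
    by (rule sum.cong) auto
  also have "\<dots> = (\<Sum>u\<in>V. h (f u))"
    using assms by (intro sum.group) auto
  finally show ?thesis ..
qed

lemma status_eq_sum_levels:
  assumes "finite V"
  shows "status V E S = (\<Sum>i\<le>terminal_index V E S. i * card (level V E S i))"
  using sum_comp_eq_sum_card_fibres[of V "setdist E S" "terminal_index V E S" id] assms
  by (simp add: status_def level_def setdist_le_terminal_index)

lemma card_eq_sum_levels:
  assumes "finite V"
  shows "card V = (\<Sum>i\<le>terminal_index V E S. card (level V E S i))"
  using sum_comp_eq_sum_card_fibres[of V "setdist E S" "terminal_index V E S" "\<lambda>_. 1"] assms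
  by (simp add: level_def setdist_le_terminal_index)

lemma card_le_card_level_0:
  assumes "finite V" and "S \<subseteq> V"
  shows "card S \<le> card (level V E S 0)"
proof (rule card_mono)
  show "finite (level V E S 0)" using assms(1) by (simp add: level_def)
  show "S \<subseteq> level V E S 0"
    using assms finite_subset[OF assms(2,1)] by (auto simp: level_def setdist_eq_0)
qed

lemma weighted_level_sum_bound:
  fixes c :: "nat \<Rightarrow> nat"
  assumes level_0: "s \<le> c 0"
    and inner: "\<And>i. 0 < i \<Longrightarrow> i < t \<Longrightarrow> 2 \<le> c i"
    and second: "2 < t \<Longrightarrow> 3 \<le> c 2"
  shows "int (\<Sum>i\<le>t. i * c i) + int t ^ 2 \<le> int t * (int (\<Sum>i\<le>t. c i) - int s) + 2"
proof -
  define D where "D = (\<Sum>i\<le>t. (t - i) * c i)"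
  have "(\<Sum>i\<le>t. i * c i) + D = (\<Sum>i\<le>t. t * c i)"
    unfolding D_def sum.distrib[symmetric]
    by (rule sum.cong) (auto simp flip: add_mult_distrib)
  then have total: "(\<Sum>i\<le>t. i * c i) + D = t * (\<Sum>i\<le>t. c i)"
    by (simp add: sum_distrib_left)
  \<comment> \<open>The term \<open>2 t\<close> at level 0 makes the middle weights \<open>2 (t - i)\<close> run over all of \<open>{0..t}\<close>.\<close>
  have "(\<Sum>i\<le>t. (if i = 0 then t * s else 0) + 2 * (t - i) + (if i = 2 then t - 2 else 0))
      \<le> (\<Sum>i\<le>t. (t - i) * c i + (if i = 0 then 2 * t else 0))"
  proof (rule sum_mono)
    fix i assume "i \<in> {..t}"
    then consider "i = 0" | "0 < i" "i < t" | "i = t" by fastforce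
    then show "(if i = 0 then t * s else 0) + 2 * (t - i) + (if i = 2 then t - 2 else 0)
        \<le> (t - i) * c i + (if i = 0 then 2 * t else 0)"
    proof cases
      case 1
      then show ?thesis using level_0 by simp
    next
      case 2
      then have "2 + (if i = 2 then 1 else 0) \<le> c i"
        using inner second by (cases "i = 2") auto
      from mult_le_mono2[OF this, of "t - i"] show ?thesis
        using 2 by (simp add: algebra_simps split: if_splits)
    qed simp
  qed
  moreover have "2 * (\<Sum>i\<le>t. t - i) = t * (t + 1)"
  proof -
    have "(\<Sum>i\<le>t. t - i) = (\<Sum>i = 0..t. i)"
      using sum.atLeastAtMost_rev[of "\<lambda>i. t - i" 0 t] by (simp add: atMost_atLeast0)
    then show ?thesis using double_gauss_sum[of t, where ?'a = nat] by simp
  qed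
  ultimately have "t * s + t * (t + 1) + (if 2 \<le> t then t - 2 else 0) \<le> D + 2 * t"
    by (simp add: D_def sum.distrib sum_distrib_left[symmetric])
  then have "t * s + t ^ 2 \<le> D + 2"
    by (cases "2 \<le> t") (auto simp: power2_eq_square algebra_simps)
  then have "int t * int s + int t ^ 2 \<le> int D + 2"
    by (metis of_nat_add of_nat_le_iff of_nat_mult of_nat_numeral of_nat_power)
  with arg_cong[OF total, of int] show ?thesis
    by (simp add: algebra_simps)
qed

lemma four_times_parabola_bound:
  fixes n t x :: int
  assumes "x + t ^ 2 \<le> t * n + 2"
  shows "4 * x \<le> n ^ 2 + (if even n then 8 else 7)"
proof -
  have square: "4 * x \<le> n ^ 2 + 8 - (n - 2 * t) ^ 2"
    using assms by (simp add: algebra_simps power2_eq_square)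
  show ?thesis
  proof (cases "even n")
    case True
    have "4 * x \<le> n ^ 2 + 8" using square zero_le_power2[of "n - 2 * t"] by linarith
    then show ?thesis using True by simp
  next
    case False
    then have "n - 2 * t \<noteq> 0" by presburger
    then have "1 \<le> (n - 2 * t) ^ 2" by (simp add: int_one_le_iff_zero_less)
    then show ?thesis using square False by simp
  qed
qed

theorem lemma7:
  fixes V :: "'a set" and E :: "'a \<Rightarrow> 'a \<Rightarrow> bool" and S :: "'a set" and n s :: nat
  assumes "n \<ge> 1" and "s \<ge> 1"
    and "simple_graph V E" and "connected_graph V E"
    and "card V = n + s"
    and "S \<subseteq> V" and "card S = s"
    and "\<forall>i. 1 \<le> i \<and> i < terminal_index V E S \<longrightarrow> card (level V E S i) \<ge> 2"
    and "2 < terminal_index V E S \<longrightarrow> card (level V E S 2) \<ge> 3"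
  shows "real (status V E S) \<le> (if even n then (real n ^ 2 + 8) / 4 else (real n ^ 2 + 7) / 4)"
proof -
  define t where "t = terminal_index V E S"
  have "finite V" using assms(3) by (simp add: simple_graph_def)
  then have "int (status V E S) + int t ^ 2 \<le> int t * (int (card V) - int s) + 2"
    unfolding status_eq_sum_levels[OF \<open>finite V\<close>] card_eq_sum_levels[OF \<open>finite V\<close>, of E S]
      t_def[symmetric]
    using card_le_card_level_0[OF \<open>finite V\<close> assms(6)] assms(7-9)
    by (intro weighted_level_sum_bound) (auto simp: t_def)
  then have "int (status V E S) + int t ^ 2 \<le> int t * int n + 2"
    using assms(5) by simp
  then have "4 * int (status V E S) \<le> int n ^ 2 + (if even n then 8 else 7)"
    using four_times_parabola_bound by force
  then have "real_of_int (4 * int (status V E S))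
      \<le> real_of_int (int n ^ 2 + (if even n then 8 else 7))"
    by (simp only: of_int_le_iff)
  then show ?thesis by (simp split: if_splits)
qed

end
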